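(* Let $(G,\mathcal{C})$ be a CER graph. If $\{v,w\}\in\tilde E$ and $c(v,w)=k\in F_i$ for some $i\in[r]$, then $c(v)=c(w)=i$.
   Context: $G=(V,E)$ finite simple undirected graph, $V=[p]$; coloring: vertex color classes $V_1,\dots,V_r$, edge color classes $E_{r+1},\dots,E_{r+R}$ partitioning $E$. $\tilde E=E\cup\{\{v\}:v\in V\}$, $E_i=\{\{v\}:v\in V_i\}$; $c(v,w)=k$ iff $\{v,w\}\in E_k$; $c(v)=c(v,v)$. $F_i=\{c(v,w):\{v,w\}\in\tilde E,\ c(v)=c(w)=i\}$. For an ordering $(V_{\eta_1},\dots,V_{\eta_r})$: $\pi(v)=i$ iff $v\in V_{\eta_i}$, $V_{\le i}=V_{\eta_1}\cup\dots\cup V_{\eta_i}$; it is a cpeo if every $v\in V_{\eta_i}$ is simplicial (neighbours form a clique) in $G[V_{\eta_i}\cup\dots\cup V_{\eta_r}]$; $m_{v\to w}(k,h)=|\{u\in V_{\le\min(\pi(v),\pi(w))}: c(v,u)=k, c(u,w)=h\}|$ and $m_{v\leftrightarrow w}(k,h)=m_{v\to w}(k,h)+m_{v\to w}(h,k)$ for $\{v,w\}\in\tilde E$. (M1): $c(v,w)=c(v',w')$ implies $m_{v\leftrightarrow w}=m_{v'\leftrightarrow w'}$. $(G,\mathcal{C})$ is CER if some ordering is a cpeo and satisfies (M1). *)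

theory Defs
  imports Main
begin

text \<open>A colouring is a function
  col on tilde-E: singletons {v} get vertex colours in {1..r}, edges get colours in
  {r+1..r+R}; every colour class is nonempty (partition). c(v,w) = col {v,w}.\<close>

definition simple_graph :: "nat \<Rightarrow> nat set set \<Rightarrow> bool" where
  "simple_graph p E \<equiv> (\<forall>e\<in>E. e \<subseteq> {1..p} \<and> card e = 2)"

definition Et :: "nat \<Rightarrow> nat set set \<Rightarrow> nat set set" where
  "Et p E = E \<union> {{v} | v. v \<in> {1..p}}"

definition coloring :: "nat \<Rightarrow> nat set set \<Rightarrow> nat \<Rightarrow> nat \<Rightarrow> (nat set \<Rightarrow> nat) \<Rightarrow> bool" where
  "coloring p E r R col \<equiv> simple_graph p E
     \<and> (\<forall>v\<in>{1..p}. col {v} \<in> {1..r})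
     \<and> (\<forall>e\<in>E. col e \<in> {r+1..r+R})
     \<and> (\<forall>i\<in>{1..r}. \<exists>v\<in>{1..p}. col {v} = i)
     \<and> (\<forall>k\<in>{r+1..r+R}. \<exists>e\<in>E. col e = k)"

definition Fcol :: "nat \<Rightarrow> nat set set \<Rightarrow> (nat set \<Rightarrow> nat) \<Rightarrow> nat \<Rightarrow> nat set" where
  "Fcol p E col i = {col {v,w} | v w. {v,w} \<in> Et p E \<and> col {v} = i \<and> col {w} = i}"

text \<open>Position pi(v) = i iff v is in V_(eta i).\<close>
definition pos :: "nat \<Rightarrow> (nat set \<Rightarrow> nat) \<Rightarrow> (nat \<Rightarrow> nat) \<Rightarrow> nat \<Rightarrow> nat" where
  "pos r col \<eta> v = inv_into {1..r} \<eta> (col {v})"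

definition mdir :: "nat \<Rightarrow> nat set set \<Rightarrow> nat \<Rightarrow> (nat set \<Rightarrow> nat) \<Rightarrow> (nat \<Rightarrow> nat)
    \<Rightarrow> nat \<Rightarrow> nat \<Rightarrow> nat \<Rightarrow> nat \<Rightarrow> nat" where
  "mdir p E r col \<eta> v w k h = card {u \<in> {1..p}.
      pos r col \<eta> u \<le> min (pos r col \<eta> v) (pos r col \<eta> w)
      \<and> {v,u} \<in> Et p E \<and> {u,w} \<in> Et p E \<and> col {v,u} = k \<and> col {u,w} = h}"

definition msym :: "nat \<Rightarrow> nat set set \<Rightarrow> nat \<Rightarrow> (nat set \<Rightarrow> nat) \<Rightarrow> (nat \<Rightarrow> nat)
    \<Rightarrow> nat \<Rightarrow> nat \<Rightarrow> nat \<Rightarrow> nat \<Rightarrow> nat" where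
  "msym p E r col \<eta> v w k h = mdir p E r col \<eta> v w k h + mdir p E r col \<eta> v w h k"

definition is_cpeo :: "nat \<Rightarrow> nat set set \<Rightarrow> nat \<Rightarrow> (nat set \<Rightarrow> nat) \<Rightarrow> (nat \<Rightarrow> nat) \<Rightarrow> bool" where
  "is_cpeo p E r col \<eta> \<equiv> (\<forall>v\<in>{1..p}. \<forall>a b.
      {v,a} \<in> E \<and> {v,b} \<in> E \<and> a \<noteq> b
      \<and> pos r col \<eta> v \<le> pos r col \<eta> a \<and> pos r col \<eta> v \<le> pos r col \<eta> b
      \<longrightarrow> {a,b} \<in> E)"

definition M1 :: "nat \<Rightarrow> nat set set \<Rightarrow> nat \<Rightarrow> (nat set \<Rightarrow> nat) \<Rightarrow> (nat \<Rightarrow> nat) \<Rightarrow> bool" where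
  "M1 p E r col \<eta> \<equiv> (\<forall>v w v' w'. {v,w} \<in> Et p E \<and> {v',w'} \<in> Et p E
      \<and> col {v,w} = col {v',w'} \<longrightarrow> msym p E r col \<eta> v w = msym p E r col \<eta> v' w')"

definition CER :: "nat \<Rightarrow> nat set set \<Rightarrow> nat \<Rightarrow> nat \<Rightarrow> (nat set \<Rightarrow> nat) \<Rightarrow> bool" where
  "CER p E r R col \<equiv> coloring p E r R col \<and>
     (\<exists>\<eta>. bij_betw \<eta> {1..r} {1..r} \<and> is_cpeo p E r col \<eta> \<and> M1 p E r col \<eta>)"

end

theory Submission
  imports Defs
begin

text \<open>Only (M1) is needed. Fix an edge colour \<open>k\<close> and a vertex colour \<open>a\<close>. For an edge
  \<open>{v,w}\<close> of colour \<open>k\<close>, the only vertex \<open>u\<close> that can join \<open>v\<close> with colour \<open>a\<close> is \<open>u = v\<close>,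
  so \<open>m\<^sub>v\<^sub>\<leftrightarrow>\<^sub>w(a,k)\<close> counts which of the endpoints have colour \<open>a\<close> and come no later than the other in the
  ordering. If \<open>k \<in> F\<^sub>i\<close> is witnessed by an edge with both ends of colour \<open>i\<close>, this count
  is 2 there, so by (M1) it is 2 for \<open>{v,w}\<close> as well, forcing \<open>c(v) = c(w) = i\<close>.
  A witness that is a singleton makes \<open>k = i\<close> a vertex colour, so \<open>{v,w}\<close> is a singleton.\<close>

lemma Et_not_edge_eq: "{v,u} \<in> Et p E \<Longrightarrow> {v,u} \<notin> E \<Longrightarrow> u = v"
  unfolding Et_def by (auto simp: doubleton_eq_iff)

lemma coloring_edge_col_gt:
  "coloring p E r R col \<Longrightarrow> e \<in> E \<Longrightarrow> r < col e"
  unfolding coloring_def by force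

lemma coloring_Et_col_le_iff:
  assumes "coloring p E r R col" "{v,w} \<in> Et p E"
  shows "col {v,w} \<le> r \<longleftrightarrow> v = w"
proof
  assume "col {v,w} \<le> r"
  then have "{v,w} \<notin> E" using coloring_edge_col_gt[OF assms(1)] by force
  then show "v = w" using Et_not_edge_eq assms(2) by (metis insert_commute)
next
  assume "v = w"
  moreover have "{v} \<notin> E" using assms(1) unfolding coloring_def simple_graph_def by force
  ultimately have "v \<in> {1..p}" using assms(2) unfolding Et_def by auto
  then show "col {v,w} \<le> r" using assms(1) \<open>v = w\<close> unfolding coloring_def by auto
qed

lemma mdir_swap: "mdir p E r col \<eta> v w k h = mdir p E r col \<eta> w v h k"
  unfolding mdir_def by (simp add: insert_commute min.commute conj_ac)

lemma mdir_vertex_col_edge_col: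
  assumes c: "coloring p E r R col" and e: "{v,w} \<in> E" and a: "a \<le> r"
  shows "mdir p E r col \<eta> v w a (col {v,w})
           = of_bool (pos r col \<eta> v \<le> pos r col \<eta> w \<and> col {v} = a)"
proof -
  define S where "S = {u \<in> {1..p}. pos r col \<eta> u \<le> min (pos r col \<eta> v) (pos r col \<eta> w)
      \<and> {v,u} \<in> Et p E \<and> {u,w} \<in> Et p E \<and> col {v,u} = a \<and> col {u,w} = col {v,w}}"
  have "S \<subseteq> {v}"
  proof
    fix u assume u: "u \<in> S"
    then have "{v,u} \<notin> E" using a coloring_edge_col_gt[OF c] unfolding S_def by force
    with u show "u \<in> {v}" unfolding S_def using Et_not_edge_eq by blast
  qed
  moreover have "v \<in> S \<longleftrightarrow> pos r col \<eta> v \<le> pos r col \<eta> w \<and> col {v} = a"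
    using e c unfolding S_def Et_def coloring_def simple_graph_def by auto
  ultimately have "S = (if pos r col \<eta> v \<le> pos r col \<eta> w \<and> col {v} = a then {v} else {})"
    by auto
  then show ?thesis unfolding mdir_def S_def[symmetric] by simp
qed

lemma msym_vertex_col_edge_col:
  assumes "coloring p E r R col" "{v,w} \<in> E" "a \<le> r"
  shows "msym p E r col \<eta> v w a (col {v,w})
           = of_bool (pos r col \<eta> v \<le> pos r col \<eta> w \<and> col {v} = a)
             + of_bool (pos r col \<eta> w \<le> pos r col \<eta> v \<and> col {w} = a)"
proof -
  have "{w,v} \<in> E" using assms(2) by (simp add: insert_commute)
  from mdir_vertex_col_edge_col[OF assms(1) this assms(3)]
  show ?thesis
    unfolding msym_def mdir_swap[of _ _ _ _ _ v w "col {v,w}"]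
      mdir_vertex_col_edge_col[OF assms] by (simp add: insert_commute)
qed

theorem lemma7p4:
  fixes p r R i :: nat and E :: "nat set set" and col :: "nat set \<Rightarrow> nat" and v w :: nat
  assumes "CER p E r R col"
    and "{v,w} \<in> Et p E"
    and "i \<in> {1..r}"
    and "col {v,w} \<in> Fcol p E col i"
  shows "col {v} = i \<and> col {w} = i"
proof -
  from assms(1) obtain \<eta> where c: "coloring p E r R col" and m1: "M1 p E r col \<eta>"
    unfolding CER_def by blast
  from assms(4) obtain v' w' where vw': "col {v',w'} = col {v,w}" "{v',w'} \<in> Et p E"
      "col {v'} = i" "col {w'} = i"
    unfolding Fcol_def by auto
  have i: "i \<le> r" using assms(3) by simp
  show ?thesis
  proof (cases "v' = w'")
    case True
    then have "v = w" using vw' i coloring_Et_col_le_iff[OF c] assms(2) by (metis insert_absorb2)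
    then show ?thesis using True vw' by simp
  next
    case False
    then have "v \<noteq> w" using vw' coloring_Et_col_le_iff[OF c] assms(2) by metis
    then have e: "{v,w} \<in> E" and e': "{v',w'} \<in> E"
      using Et_not_edge_eq assms(2) vw'(2) False by blast+
    have "pos r col \<eta> v' = pos r col \<eta> w'" unfolding pos_def using vw' by simp
    then have "msym p E r col \<eta> v' w' i (col {v,w}) = 2"
      using msym_vertex_col_edge_col[OF c e' i] vw' by simp
    moreover have "msym p E r col \<eta> v w = msym p E r col \<eta> v' w'"
      using m1 assms(2) vw' unfolding M1_def by metis
    ultimately have "msym p E r col \<eta> v w i (col {v,w}) = 2" by simp
    then show ?thesis unfolding msym_vertex_col_edge_col[OF c e i] by (simp add: of_bool_def split: if_splits)
  qed
qed

end
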